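(* Let $n,r\ge3$, let $h$ be a hermitian form on $\mathbb{C}^n$ of signature $(n-1,1)$, and let $x=(L_1,\dots,L_r)$ be an $r$-tuple of $h$-isotropic lines in $\mathbb{C}^n$. Then: (1) $x$ is semi-stable if and only if for every isotropic line $L$ one has $\#\{i: L=L_i\}\le r/2$; (2) if $r$ is even, then $x$ is semi-stable if and only if there is a derangement $\sigma$ of $\{1,\dots,r\}$ of order $2$ such that $s_\sigma(x)\neq0$.
   Context: $x$ is called semi-stable if the $r$-tuple of flags $(L_i,L_i^\perp)_{i=1,\dots,r}$ (line contained in hyperplane, $L^\perp$ the $h$-orthogonal) is semi-stable for the diagonal action of $\mathrm{SL}_n(\mathbb{C})$ on the $r$-th power of the variety of line-hyperplane flags, linearized by the embedding $(L_i,H_i)\mapsto(L_i,H_i^\perp)$ into $(\mathbb{P}(\mathbb{C}^n)\times\mathbb{P}((\mathbb{C}^n)^\vee))^r$ with line bundle $\bigotimes_i\mathrm{pr}_i^*(\mathcal{O}(1)\boxtimes\mathcal{O}(1))$ (i.e. some invariant section of a positive tensor power does not vanish). For a derangement (fixed-point-free permutation) $\sigma$, $s_\sigma(x)=\prod_{i=1}^r h(v_i,v_{\sigma(i)})$, where $v_i$ generates $L_i$ (its vanishing does not depend on the choice). *)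

theory Defs
  imports "HOL-Analysis.Analysis"
begin

text \<open>A hermitian form h is a function
  complex^'n => complex^'n => complex, complex-linear in the first argument.
  Dual vectors are also coordinate vectors, with pairing w(u) = sum_j w$j * u$j.\<close>

definition herm_sig_n1_1 :: "(complex^'n \<Rightarrow> complex^'n \<Rightarrow> complex) \<Rightarrow> bool" where
  "herm_sig_n1_1 h \<longleftrightarrow>
     (\<exists>(A::complex^'n^'n) j. invertible A \<and>
        (\<forall>u v. h u v = (\<Sum>i\<in>UNIV. (if i = j then -1 else 1) * (A *v u)$i * cnj ((A *v v)$i))))"

definition cline :: "complex^'n \<Rightarrow> (complex^'n) set" where
  "cline v = range (\<lambda>c::complex. c *s v)"

definition is_line :: "(complex^'n) set \<Rightarrow> bool" where
  "is_line L \<longleftrightarrow> (\<exists>v. v \<noteq> 0 \<and> L = cline v)"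

definition isotropic_line :: "(complex^'n \<Rightarrow> complex^'n \<Rightarrow> complex) \<Rightarrow> (complex^'n) set \<Rightarrow> bool" where
  "isotropic_line h L \<longleftrightarrow> is_line L \<and> (\<forall>u\<in>L. h u u = 0)"

definition gen :: "(complex^'n) set \<Rightarrow> complex^'n" where
  "gen L = (SOME v. v \<in> L \<and> v \<noteq> 0)"

text \<open>Polynomial functions in the coordinates of points (v_i, w_i)_{i<r} of (C^n x (C^n)^dual)^r.\<close>
inductive poly_fun :: "nat \<Rightarrow> ((nat \<Rightarrow> complex^'n) \<times> (nat \<Rightarrow> complex^'n) \<Rightarrow> complex) \<Rightarrow> bool"
  for r :: nat where
  pconst: "poly_fun r (\<lambda>p. c)"
| pvar1: "i < r \<Longrightarrow> poly_fun r (\<lambda>p. (fst p i) $ j)"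
| pvar2: "i < r \<Longrightarrow> poly_fun r (\<lambda>p. (snd p i) $ j)"
| padd: "poly_fun r F \<Longrightarrow> poly_fun r G \<Longrightarrow> poly_fun r (\<lambda>p. F p + G p)"
| pmult: "poly_fun r F \<Longrightarrow> poly_fun r G \<Longrightarrow> poly_fun r (\<lambda>p. F p * G p)"

text \<open>Sections of the k-th tensor power of the bundle tensor_i pr_i^*(O(1) boxtimes O(1)):
  polynomials multihomogeneous of degree k in each v_i and each w_i.\<close>
definition multihom :: "nat \<Rightarrow> nat \<Rightarrow> ((nat \<Rightarrow> complex^'n) \<times> (nat \<Rightarrow> complex^'n) \<Rightarrow> complex) \<Rightarrow> bool" where
  "multihom r k F \<longleftrightarrow> poly_fun r F \<and>
     (\<forall>v w i (c::complex). i < r \<longrightarrow>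
        F (v(i := c *s v i), w) = c ^ k * F (v, w) \<and>
        F (v, w(i := c *s w i)) = c ^ k * F (v, w))"

text \<open>SL_n-invariance: g acts on vectors by v -> g v and on dual vectors by w -> w o g^{-1},
  i.e. on coordinate vectors by transpose(g^{-1}).\<close>
definition SL_invariant :: "((nat \<Rightarrow> complex^'n) \<times> (nat \<Rightarrow> complex^'n) \<Rightarrow> complex) \<Rightarrow> bool" where
  "SL_invariant F \<longleftrightarrow>
     (\<forall>(g::complex^'n^'n) g' v w. det g = 1 \<longrightarrow> g ** g' = mat 1 \<longrightarrow>
        F (\<lambda>i. g *v v i, \<lambda>i. transpose g' *v w i) = F (v, w))"

text \<open>The point of (P(C^n) x P((C^n)^dual))^r given by the flags (L_i, L_i^perp):
  L_i^perp is the hyperplane annihilated by the functional u -> h u v_i.\<close>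
definition flag_point :: "(complex^'n \<Rightarrow> complex^'n \<Rightarrow> complex) \<Rightarrow> (nat \<Rightarrow> (complex^'n) set)
     \<Rightarrow> (nat \<Rightarrow> complex^'n) \<times> (nat \<Rightarrow> complex^'n)" where
  "flag_point h L = (\<lambda>i. gen (L i), \<lambda>i. (\<chi> j. h (axis j 1) (gen (L i))))"

definition semistable :: "(complex^'n \<Rightarrow> complex^'n \<Rightarrow> complex) \<Rightarrow> nat \<Rightarrow> (nat \<Rightarrow> (complex^'n) set) \<Rightarrow> bool" where
  "semistable h r L \<longleftrightarrow>
     (\<exists>k F. k > 0 \<and> multihom r k F \<and> SL_invariant F \<and> F (flag_point h L) \<noteq> 0)"

definition s_sigma :: "(complex^'n \<Rightarrow> complex^'n \<Rightarrow> complex) \<Rightarrow> nat \<Rightarrow> (nat \<Rightarrow> nat) \<Rightarrow> (nat \<Rightarrow> (complex^'n) set) \<Rightarrow> complex" where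
  "s_sigma h r \<sigma> L = (\<Prod>i<r. h (gen (L i)) (gen (L (\<sigma> i))))"

definition derangement :: "nat \<Rightarrow> (nat \<Rightarrow> nat) \<Rightarrow> bool" where
  "derangement r \<sigma> \<longleftrightarrow> \<sigma> permutes {..<r} \<and> (\<forall>i<r. \<sigma> i \<noteq> i)"

end

theory Submission
  imports Defs
begin

(* Sufficiency: for a permutation sigma, the product of the pairings w_(sigma i)(v_i) is an
   SL_n-invariant of degree one whose value at x is s_sigma(x).  If no line occurs more than r/2
   times, sorting the indices by line and rotating them by r/2 gives a permutation (an involution
   for even r) moving every L_i to a different line; distinct isotropic lines are never
   h-orthogonal in signature (n-1,1), so s_sigma(x) is nonzero.
   Necessity: if a line u carries more than r/2 of the L_i, the one-parameter subgroup of SL_n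
   acting by t^(n-1) on u and by t^-1 on a complement multiplies every invariant of degree k at x
   by a positive power of t, while the moved point stays bounded as t tends to 0; hence every
   invariant vanishes at x. *)

section \<open>Isotropic lines of a form of signature (n-1,1)\<close>

definition dual_pair :: "complex^'n \<Rightarrow> complex^'n \<Rightarrow> complex" where
  "dual_pair w v = (\<Sum>j\<in>UNIV. w$j * v$j)"

lemma dual_pair_smult_right: "dual_pair w (c *s v) = c * dual_pair w v"
  unfolding dual_pair_def by (simp add: sum_distrib_left mult_ac)

lemma dual_pair_smult_left: "dual_pair (c *s w) v = c * dual_pair w v"
  unfolding dual_pair_def by (simp add: sum_distrib_left mult_ac)

lemma dual_pair_vector_matrix_mult: "dual_pair (w v* M) v = dual_pair w (M *v v)"
  unfolding dual_pair_def vector_matrix_mult_def matrix_vector_mult_def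
  by (simp add: sum_distrib_left sum_distrib_right) (subst sum.swap, simp add: mult_ac)

lemma herm_sig_n1_1E:
  fixes h :: "complex^'n \<Rightarrow> complex^'n \<Rightarrow> complex"
  assumes "herm_sig_n1_1 h"
  obtains A :: "complex^'n^'n" and j0 where "invertible A"
    "\<And>u v. h u v = (\<Sum>i\<in>UNIV. (if i = j0 then -1 else 1) * (A *v u)$i * cnj ((A *v v)$i))"
  using assms unfolding herm_sig_n1_1_def by blast

lemma herm_sig_n1_1_linear_left:
  fixes h :: "complex^'n \<Rightarrow> complex^'n \<Rightarrow> complex"
  assumes "herm_sig_n1_1 h"
  shows "h v z = dual_pair (\<chi> j. h (axis j 1) z) v"
proof -
  obtain A :: "complex^'n^'n" and j0 where h:
    "\<And>u v. h u v = (\<Sum>i\<in>UNIV. (if i = j0 then -1 else 1) * (A *v u)$i * cnj ((A *v v)$i))"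
    using herm_sig_n1_1E[OF assms] by metis
  have ax: "(A *v axis j 1)$i = A$i$j" for i j
    by (simp add: matrix_vector_mult_def axis_def if_distrib cong: if_cong)
  have "dual_pair (\<chi> j. h (axis j 1) z) v =
      (\<Sum>j\<in>UNIV. (\<Sum>i\<in>UNIV. (if i = j0 then -1 else 1) * A$i$j * cnj ((A *v z)$i)) * v$j)"
    unfolding dual_pair_def by (simp add: h ax)
  also have "\<dots> = (\<Sum>i\<in>UNIV. (if i = j0 then -1 else 1) * (\<Sum>j\<in>UNIV. A$i$j * v$j) * cnj ((A *v z)$i))"
    unfolding sum_distrib_left sum_distrib_right by (subst sum.swap) (simp add: mult_ac)
  also have "\<dots> = h v z" by (simp add: h matrix_vector_mult_def)
  finally show ?thesis by simp
qed

lemma herm_sig_n1_1_cnj_sym: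
  fixes h :: "complex^'n \<Rightarrow> complex^'n \<Rightarrow> complex"
  assumes "herm_sig_n1_1 h"
  shows "h q p = cnj (h p q)"
proof -
  obtain A :: "complex^'n^'n" and j0 where h:
    "\<And>u v. h u v = (\<Sum>i\<in>UNIV. (if i = j0 then -1 else 1) * (A *v u)$i * cnj ((A *v v)$i))"
    using herm_sig_n1_1E[OF assms] by metis
  show ?thesis unfolding h cnj_sum by (rule sum.cong) auto
qed

lemma lorentz_form_eq_0_imp_zero:
  fixes c :: "complex^'n"
  assumes "c$j0 = 0" "(\<Sum>i\<in>UNIV. (if i = j0 then -1 else 1) * c$i * cnj (c$i)) = 0"
  shows "c = 0"
proof -
  have "(\<Sum>i\<in>UNIV. (if i = j0 then -1 else 1) * c$i * cnj (c$i))
      = complex_of_real (\<Sum>i\<in>UNIV. (norm (c$i))^2)"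
    unfolding of_real_sum
    by (rule sum.cong) (auto simp: assms(1) complex_norm_square[symmetric] simp del: of_real_power)
  then have "complex_of_real (\<Sum>i\<in>UNIV. (norm (c$i))^2) = 0" using assms(2) by metis
  then have "(\<Sum>i\<in>UNIV. (norm (c$i))^2) = 0" by (simp only: of_real_eq_0_iff)
  then show ?thesis by (subst (asm) sum_nonneg_eq_0_iff) (auto simp: vec_eq_iff)
qed

lemma herm_sig_n1_1_isotropic_orthogonal:
  fixes h :: "complex^'n \<Rightarrow> complex^'n \<Rightarrow> complex"
  assumes hs: "herm_sig_n1_1 h" and hpp: "h p p = 0" and hqq: "h q q = 0" and hpq: "h p q = 0"
    and "q \<noteq> 0"
  obtains \<mu> where "p = \<mu> *s q"
proof -
  obtain A :: "complex^'n^'n" and j0 where A: "invertible A" and h: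
    "\<And>u v. h u v = (\<Sum>i\<in>UNIV. (if i = j0 then -1 else 1) * (A *v u)$i * cnj ((A *v v)$i))"
    using herm_sig_n1_1E[OF hs] by metis
  obtain A' where A': "A' ** A = mat 1" using A unfolding invertible_def by blast
  have A_zero: "x = 0" if "A *v x = 0" for x
    using arg_cong[OF that, of "(*v) A'"] by (simp add: matrix_vector_mul_assoc A')
  have hqp: "h q p = 0" using herm_sig_n1_1_cnj_sym[OF hs, of q p] hpq by simp
  define a where "a = A *v p"
  define b where "b = A *v q"
  have "b$j0 \<noteq> 0"
  proof
    assume "b$j0 = 0"
    then have "b = 0" using hqq unfolding h b_def[symmetric] by (rule lorentz_form_eq_0_imp_zero)
    then show False using A_zero[of q] \<open>q \<noteq> 0\<close> b_def by simp
  qed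
  txt \<open>Subtracting a multiple of q kills the negative coordinate, and on that hyperplane the
    form is positive definite; but z stays isotropic, as p and q span a totally isotropic plane.\<close>
  define \<mu> where "\<mu> = a$j0 / b$j0"
  define z where "z = p - \<mu> *s q"
  have Az: "A *v z = a - \<mu> *s b"
    unfolding z_def a_def b_def by (simp add: matrix_vector_mult_diff_distrib vector_scalar_commute)
  have "(A *v z)$j0 = 0" using \<open>b$j0 \<noteq> 0\<close> unfolding Az \<mu>_def by simp
  moreover have "h z z = h p p - cnj \<mu> * h p q - \<mu> * h q p + \<mu> * cnj \<mu> * h q q"
    unfolding h Az a_def[symmetric] b_def[symmetric]
    by (simp add: sum_distrib_left sum_subtractf sum.distrib[symmetric] algebra_simps)
  then have "h z z = 0" using hpp hpq hqp hqq by simp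
  ultimately have "A *v z = 0" unfolding h by (rule lorentz_form_eq_0_imp_zero)
  then have "p = \<mu> *s q" using A_zero[of z] unfolding z_def by simp
  then show ?thesis by (rule that)
qed

lemma dual_pair_axis: "dual_pair w (axis a 1) = w$a"
  unfolding dual_pair_def axis_def by (simp add: if_distrib cong: if_cong)

lemma is_lineE:
  assumes "is_line M"
  obtains v where "v \<noteq> 0" "M = cline v"
  using assms unfolding is_line_def by blast

lemma self_in_cline: "v \<in> cline v"
  unfolding cline_def by (rule image_eqI[where x=1]) simp_all

lemma cline_eq:
  assumes "p \<in> cline v" "p \<noteq> 0"
  shows "cline p = cline v"
proof -
  obtain c where c: "p = c *s v" using assms(1) unfolding cline_def by auto
  with assms(2) have "c \<noteq> 0" by auto
  show ?thesis unfolding cline_def c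
  proof (intro set_eqI iffI)
    fix x assume "x \<in> range (\<lambda>d. d *s (c *s v))"
    then show "x \<in> range (\<lambda>d. d *s v)" by (auto simp: vector_smult_assoc)
  next
    fix x assume "x \<in> range (\<lambda>d. d *s v)"
    then obtain d where "x = d *s v" by auto
    then have "x = (d / c) *s (c *s v)" using \<open>c \<noteq> 0\<close> by (simp add: vector_smult_assoc)
    then show "x \<in> range (\<lambda>d. d *s (c *s v))" by (rule image_eqI) simp
  qed
qed

lemma gen_in_line:
  assumes "is_line M"
  shows "gen M \<in> M" and "gen M \<noteq> 0"
proof -
  obtain v where "v \<noteq> 0" "M = cline v" using assms by (rule is_lineE)
  then have "\<exists>x. x \<in> M \<and> x \<noteq> 0" using self_in_cline by blast
  then show "gen M \<in> M" "gen M \<noteq> 0" unfolding gen_def by (metis (mono_tags, lifting) someI_ex)+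
qed

lemma cline_gen:
  assumes "is_line M"
  shows "cline (gen M) = M"
proof -
  obtain v where "v \<noteq> 0" "M = cline v" using assms by (rule is_lineE)
  then show ?thesis using cline_eq gen_in_line[OF assms] by metis
qed

lemma isotropic_lines_eq_if_orthogonal:
  fixes h :: "complex^'n \<Rightarrow> complex^'n \<Rightarrow> complex"
  assumes hs: "herm_sig_n1_1 h" and iso: "isotropic_line h M" "isotropic_line h N"
    and orth: "h (gen M) (gen N) = 0"
  shows "M = N"
proof -
  have lines: "is_line M" "is_line N" using iso unfolding isotropic_line_def by auto
  have "h (gen M) (gen M) = 0" "h (gen N) (gen N) = 0"
    using iso gen_in_line(1)[OF lines(1)] gen_in_line(1)[OF lines(2)]
    unfolding isotropic_line_def by auto
  then obtain \<mu> where \<mu>: "gen M = \<mu> *s gen N"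
    using herm_sig_n1_1_isotropic_orthogonal[OF hs _ _ orth] gen_in_line(2)[OF lines(2)] by metis
  have "gen M \<in> cline (gen N)" unfolding \<mu> cline_def by blast
  then have "cline (gen M) = cline (gen N)" using cline_eq gen_in_line(2)[OF lines(1)] by blast
  then show ?thesis using cline_gen lines by metis
qed

section \<open>Multihomogeneous polynomial functions\<close>

lemma poly_fun_sum:
  assumes "finite A" "\<And>j. j \<in> A \<Longrightarrow> poly_fun r (G j)"
  shows "poly_fun r (\<lambda>p. \<Sum>j\<in>A. G j p)"
  using assms by (induction A rule: finite_induct) (auto intro: poly_fun.intros)

lemma poly_fun_prod:
  assumes "finite A" "\<And>j. j \<in> A \<Longrightarrow> poly_fun r (G j)"
  shows "poly_fun r (\<lambda>p. \<Prod>j\<in>A. G j p)"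
  using assms by (induction A rule: finite_induct) (auto intro: poly_fun.intros)

lemma poly_fun_dual_pair:
  assumes "i < r" "j < r"
  shows "poly_fun r (\<lambda>p. dual_pair (snd p j) (fst p i))"
  unfolding dual_pair_def using assms by (intro poly_fun_sum poly_fun.intros) auto

lemma poly_fun_cong:
  assumes "poly_fun r F" "\<And>i. i < r \<Longrightarrow> fst p i = fst q i \<and> snd p i = snd q i"
  shows "F p = F q"
  using assms by (induction rule: poly_fun.induct) auto

lemma isCont_poly_fun:
  fixes P :: "complex \<Rightarrow> (nat \<Rightarrow> complex^'n) \<times> (nat \<Rightarrow> complex^'n)"
  assumes "poly_fun r F"
    and "\<And>i j. isCont (\<lambda>t. fst (P t) i $ j) t0" "\<And>i j. isCont (\<lambda>t. snd (P t) i $ j) t0"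
  shows "isCont (\<lambda>t. F (P t)) t0"
  using assms by (induction rule: poly_fun.induct) (auto intro!: continuous_intros)

lemma multihom_scale_prefix:
  assumes F: "multihom r k F" and "m \<le> r"
  shows "F (\<lambda>i. if i < m then c i *s v i else v i, \<lambda>i. if i < m then d i *s w i else w i)
       = (\<Prod>i<m. c i ^ k * d i ^ k) * F (v, w)"
  using \<open>m \<le> r\<close>
proof (induction m)
  case (Suc m)
  define v' where "v' i = (if i < m then c i *s v i else v i)" for i
  define w' where "w' i = (if i < m then d i *s w i else w i)" for i
  have "(\<lambda>i. if i < Suc m then c i *s v i else v i) = v'(m := c m *s v' m)"
    "(\<lambda>i. if i < Suc m then d i *s w i else w i) = w'(m := d m *s w' m)"
    unfolding v'_def w'_def by auto
  moreover have "F (v'(m := c m *s v' m), w'(m := d m *s w' m)) = c m ^ k * d m ^ k * F (v', w')"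
    using F Suc.prems unfolding multihom_def by simp
  ultimately show ?case
    using Suc by (simp add: v'_def[symmetric] w'_def[symmetric] mult_ac)
qed simp

lemma multihom_scale:
  assumes F: "multihom r k F"
  shows "F (\<lambda>i. c i *s v i, \<lambda>i. d i *s w i) = (\<Prod>i<r. c i ^ k * d i ^ k) * F (v, w)"
proof -
  have "F (\<lambda>i. c i *s v i, \<lambda>i. d i *s w i) =
        F (\<lambda>i. if i < r then c i *s v i else v i, \<lambda>i. if i < r then d i *s w i else w i)"
    using F unfolding multihom_def by (intro poly_fun_cong) auto
  also have "\<dots> = (\<Prod>i<r. c i ^ k * d i ^ k) * F (v, w)"
    by (rule multihom_scale_prefix[OF F order_refl])
  finally show ?thesis .
qed

section \<open>Invariants from permutations\<close>

definition perm_pairing ::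
    "(nat \<Rightarrow> nat) \<Rightarrow> nat \<Rightarrow> (nat \<Rightarrow> complex^'n) \<times> (nat \<Rightarrow> complex^'n) \<Rightarrow> complex" where
  "perm_pairing \<sigma> r p = (\<Prod>i<r. dual_pair (snd p (\<sigma> i)) (fst p i))"

lemma multihom_perm_pairing:
  assumes \<sigma>: "\<sigma> permutes {..<r}"
  shows "multihom r 1 (perm_pairing \<sigma> r)"
proof -
  have "poly_fun r (perm_pairing \<sigma> r)"
    unfolding perm_pairing_def using permutes_in_image[OF \<sigma>]
    by (intro poly_fun_prod poly_fun_dual_pair) auto
  moreover have "perm_pairing \<sigma> r (v(i := c *s v i), w) = c * perm_pairing \<sigma> r (v, w)"
    if "i < r" for v w i c
  proof -
    have "perm_pairing \<sigma> r (v(i := c *s v i), w) =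
          (\<Prod>l<r. (if l = i then c else 1) * dual_pair (w (\<sigma> l)) (v l))"
      unfolding perm_pairing_def by (intro prod.cong) (auto simp: dual_pair_smult_right)
    then show ?thesis using that unfolding perm_pairing_def by (simp add: prod.distrib)
  qed
  moreover have "perm_pairing \<sigma> r (v, w(i := c *s w i)) = c * perm_pairing \<sigma> r (v, w)"
    if "i < r" for v w i c
  proof -
    have upd: "(w(i := c *s w i)) (\<sigma> l) = (if l = inv \<sigma> i then c *s w (\<sigma> l) else w (\<sigma> l))" for l
      using permutes_inverses[OF \<sigma>] by auto
    have "inv \<sigma> i < r"
      using permutes_in_image[OF permutes_inv[OF \<sigma>]] that by simp
    have "perm_pairing \<sigma> r (v, w(i := c *s w i)) =
          (\<Prod>l<r. (if l = inv \<sigma> i then c else 1) * dual_pair (w (\<sigma> l)) (v l))"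
      unfolding perm_pairing_def
      by (intro prod.cong) (auto simp: upd dual_pair_smult_left permutes_inverses[OF \<sigma>])
    then show ?thesis using \<open>inv \<sigma> i < r\<close> unfolding perm_pairing_def by (simp add: prod.distrib)
  qed
  ultimately show ?thesis unfolding multihom_def by auto
qed

lemma SL_invariant_perm_pairing: "SL_invariant (perm_pairing \<sigma> r)"
  unfolding SL_invariant_def
proof (intro allI impI)
  fix g g' :: "complex^'n^'n" and v w :: "nat \<Rightarrow> complex^'n"
  assume "det g = 1" "g ** g' = mat 1"
  then have "g' ** g = mat 1" using matrix_left_right_inverse by blast
  then show "perm_pairing \<sigma> r (\<lambda>i. g *v v i, \<lambda>i. transpose g' *v w i) = perm_pairing \<sigma> r (v, w)"
    unfolding perm_pairing_def
    by (simp add: dual_pair_vector_matrix_mult matrix_vector_mul_assoc)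
qed

lemma perm_pairing_flag_point:
  fixes h :: "complex^'n \<Rightarrow> complex^'n \<Rightarrow> complex"
  assumes "herm_sig_n1_1 h"
  shows "perm_pairing \<sigma> r (flag_point h L) = s_sigma h r \<sigma> L"
  unfolding perm_pairing_def flag_point_def s_sigma_def
  by (simp add: herm_sig_n1_1_linear_left[OF assms, symmetric])

lemma semistable_if_s_sigma_nonzero:
  fixes h :: "complex^'n \<Rightarrow> complex^'n \<Rightarrow> complex"
  assumes "herm_sig_n1_1 h" "\<sigma> permutes {..<r}" "s_sigma h r \<sigma> L \<noteq> 0"
  shows "semistable h r L"
  unfolding semistable_def
  using multihom_perm_pairing[OF assms(2)] SL_invariant_perm_pairing perm_pairing_flag_point[OF assms(1)] assms(3)
  by (intro exI[of _ 1] exI[of _ "perm_pairing \<sigma> r"]) auto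

section \<open>Permutations moving every fibre\<close>

lemma sorted_block_card:
  fixes key :: "'a \<Rightarrow> 'b::linorder"
  assumes sorted: "sorted (map key xs)" and "distinct xs"
    and ab: "a \<le> b" "b < length xs" and eq: "key (xs!a) = key (xs!b)"
  shows "b + 1 - a \<le> card {x \<in> set xs. key x = key (xs!a)}"
proof -
  have same_key: "key (xs!c) = key (xs!a)" if "c \<in> {a..b}" for c
  proof -
    have "key (xs!a) \<le> key (xs!c)" "key (xs!c) \<le> key (xs!b)"
      using sorted_nth_mono[OF sorted, of a c] sorted_nth_mono[OF sorted, of c b] that ab by auto
    then show ?thesis using eq by simp
  qed
  have "(!) xs ` {a..b} \<subseteq> {x \<in> set xs. key x = key (xs!a)}"
  proof (rule image_subsetI)
    fix c assume "c \<in> {a..b}"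
    then show "xs!c \<in> {x \<in> set xs. key x = key (xs!a)}"
      using same_key[of c] ab by simp
  qed
  moreover have "inj_on ((!) xs) {a..b}"
    using \<open>distinct xs\<close> ab by (intro inj_on_nth) auto
  ultimately show ?thesis
    using card_inj_on_le[of "(!) xs" "{a..b}"] by simp
qed

definition half_rotation :: "nat \<Rightarrow> nat \<Rightarrow> nat" where
  "half_rotation r k =
    (if k < r then if k + r div 2 < r then k + r div 2 else k + r div 2 - r else k)"

lemma half_rotation_permutes: "half_rotation r permutes {..<r}"
proof -
  have inj: "inj_on (half_rotation r) {..<r}" unfolding inj_on_def half_rotation_def by auto
  have "half_rotation r ` {..<r} \<subseteq> {..<r}" unfolding half_rotation_def by auto
  then have "half_rotation r ` {..<r} = {..<r}" using endo_inj_surj[OF finite_lessThan _ inj] by blast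
  then have "bij_betw (half_rotation r) {..<r} {..<r}" using inj by (simp add: bij_betw_def)
  then show ?thesis by (rule bij_imp_permutes) (simp add: half_rotation_def)
qed

lemma half_rotation_involution: "even r \<Longrightarrow> half_rotation r (half_rotation r k) = k"
  unfolding half_rotation_def by auto

text \<open>A block of equal keys is at most r/2 long, while k and its half rotation are at least
  r/2 apart in either direction.\<close>
lemma sorted_half_rotation_changes_key:
  fixes key :: "'a \<Rightarrow> 'b::linorder"
  assumes xs: "sorted (map key xs)" "distinct xs" "length xs = r" and "k < r"
    and small: "\<And>x. x \<in> set xs \<Longrightarrow> 2 * card {y \<in> set xs. key y = key x} \<le> r"
  shows "key (xs ! half_rotation r k) \<noteq> key (xs ! k)"
proof
  assume eq: "key (xs ! half_rotation r k) = key (xs ! k)"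
  have block: "2 * (b + 1 - a) \<le> r" if "a \<le> b" "b < r" "key (xs!a) = key (xs!b)" for a b
    using sorted_block_card[OF xs(1,2) that(1)] small[OF nth_mem, of a] that xs(3) by simp
  show False
  proof (cases "k + r div 2 < r")
    case True
    then show False using block[of k "k + r div 2"] eq \<open>k < r\<close> unfolding half_rotation_def by simp
  next
    case False
    then have "2 * (k + 1 - (k + r div 2 - r)) \<le> r"
      using block[of "k + r div 2 - r" k] eq \<open>k < r\<close> unfolding half_rotation_def by simp
    then show False using False \<open>k < r\<close> by simp
  qed
qed

text \<open>Sort the indices by the least index of their fibre, so that each fibre of f becomes a
  contiguous block, and rotate by half.\<close>
lemma exists_perm_moving_fibres:
  fixes f :: "nat \<Rightarrow> 'b"
  assumes fibres: "\<forall>i<r. 2 * card {j. j < r \<and> f j = f i} \<le> r"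
  shows "\<exists>\<sigma>. \<sigma> permutes {..<r} \<and> (\<forall>i<r. f (\<sigma> i) \<noteq> f i) \<and> (even r \<longrightarrow> \<sigma> \<circ> \<sigma> = id)"
proof -
  define key where "key i = (LEAST j. f j = f i)" for i
  have "f (key i) = f i" for i unfolding key_def by (rule LeastI[of _ i]) simp
  then have key_eq: "key i = key j \<longleftrightarrow> f i = f j" for i j
    unfolding key_def by metis
  define xs where "xs = sort_key key [0..<r]"
  have xs: "sorted (map key xs)" "distinct xs" "length xs = r" "set xs = {..<r}"
    unfolding xs_def by auto
  have "{y \<in> set xs. key y = key x} = {j. j < r \<and> f j = f x}" for x
    using xs(4) key_eq by auto
  then have moves: "key (xs ! half_rotation r k) \<noteq> key (xs ! k)" if "k < r" for k
    using sorted_half_rotation_changes_key[OF xs(1-3) that] fibres xs(4) by simp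
  define \<pi> where "\<pi> k = (if k < r then xs ! k else k)" for k
  have "bij_betw ((!) xs) {..<r} {..<r}" using bij_betw_nth[OF xs(2)] xs(3,4) by simp
  then have "bij_betw \<pi> {..<r} {..<r}" by (rule bij_betw_cong[THEN iffD1, rotated]) (simp add: \<pi>_def)
  then have \<pi>: "\<pi> permutes {..<r}" by (rule bij_imp_permutes) (simp add: \<pi>_def)
  define \<sigma> where "\<sigma> = \<pi> \<circ> half_rotation r \<circ> inv \<pi>"
  have "\<sigma> permutes {..<r}"
    unfolding \<sigma>_def by (intro permutes_compose permutes_inv \<pi> half_rotation_permutes)
  moreover have "f (\<sigma> i) \<noteq> f i" if "i < r" for i
  proof -
    define k where "k = inv \<pi> i"
    have "k < r" using permutes_in_image[OF permutes_inv[OF \<pi>]] that k_def by auto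
    then have "i = xs ! k" using permutes_inverses(1)[OF \<pi>, of i] k_def \<pi>_def by simp
    moreover have "\<sigma> i = xs ! half_rotation r k"
      using permutes_in_image[OF half_rotation_permutes] \<open>k < r\<close>
      unfolding \<sigma>_def k_def \<pi>_def by simp
    ultimately show ?thesis using moves[OF \<open>k < r\<close>] key_eq by metis
  qed
  moreover have "\<sigma> \<circ> \<sigma> = id" if "even r"
    unfolding \<sigma>_def
    by (rule ext) (simp add: permutes_inverses[OF \<pi>] half_rotation_involution[OF that])
  ultimately show ?thesis by blast
qed

section \<open>Destabilising one-parameter subgroups\<close>

lemma eq_0_if_pow_mult_near_0:
  fixes G :: "'a::real_normed_field \<Rightarrow> 'a"
  assumes "isCont G 0" "e > 0" "\<And>t. t \<noteq> 0 \<Longrightarrow> c = t ^ e * G t"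
  shows "c = 0"
proof -
  have "((\<lambda>t. t ^ e * G t) \<longlongrightarrow> 0 ^ e * G 0) (at 0)"
    using assms(1) by (intro tendsto_intros) (simp add: isCont_def)
  moreover have "eventually (\<lambda>t. t ^ e * G t = c) (at 0)"
    using assms(3) by (auto simp: eventually_at_filter)
  ultimately have "((\<lambda>t. c) \<longlongrightarrow> 0) (at (0::'a))"
    using assms(2) tendsto_cong by (fastforce simp: power_0_left)
  then show ?thesis by (rule LIM_const_eq)
qed

lemma prod_if_mem_inverse:
  fixes X :: "'a::field"
  assumes "finite A" "S \<subseteq> A" "card A < 2 * card S" "X \<noteq> 0"
  shows "(\<Prod>i\<in>A. if i \<in> S then X else inverse X) = X ^ (2 * card S - card A)"
proof -
  have S: "card S \<le> card A" "card (A - S) = card A - card S"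
    using assms(1,2) by (auto intro: card_mono simp: card_Diff_subset finite_subset)
  have "(\<Prod>i\<in>A. if i \<in> S then X else inverse X) = X ^ card S * inverse X ^ (card A - card S)"
    using assms(2) S(2) by (simp add: prod.If_cases assms(1) Int_absorb1 Diff_eq[symmetric])
  also have "X ^ card S = X ^ (2 * card S - card A) * X ^ (card A - card S)"
    using S(1) assms(3) by (simp flip: power_add)
  finally show ?thesis
    using assms(4) by (simp add: power_inverse[symmetric] field_simps)
qed

definition diagm :: "('n \<Rightarrow> complex) \<Rightarrow> complex^'n^'n" where
  "diagm d = (\<chi> i j. if i = j then d i else 0)"

lemma diagm_mult_vec: "diagm d *v z = (\<chi> i. d i * z$i)"
proof -
  have "(\<Sum>j\<in>UNIV. (if i = j then d i else 0) * z$j)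
      = (\<Sum>j\<in>UNIV. if i = j then d i * z$j else 0)" for i
    by (rule sum.cong) auto
  then show ?thesis unfolding diagm_def matrix_vector_mult_def by (simp add: vec_eq_iff)
qed

lemma vec_mult_diagm: "z v* diagm d = (\<chi> i. z$i * d i)"
proof -
  have "(\<Sum>j\<in>UNIV. z$j * (if j = i then d j else 0))
      = (\<Sum>j\<in>UNIV. if j = i then z$j * d j else 0)" for i
    by (rule sum.cong) auto
  then show ?thesis unfolding diagm_def vector_matrix_mult_def by (simp add: vec_eq_iff)
qed

lemma diagm_mult_diagm: "diagm d ** diagm e = diagm (\<lambda>i. d i * e i)"
proof -
  have "(\<Sum>k\<in>UNIV. (if i = k then d i else 0) * (if k = j then e k else 0)) =
        (\<Sum>k\<in>UNIV. if k = i then (if i = j then d i * e i else 0) else 0)" for i j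
    by (rule sum.cong) auto
  then show ?thesis unfolding diagm_def matrix_matrix_mult_def by (simp add: vec_eq_iff)
qed

lemma diagm_1: "diagm (\<lambda>i. 1) = mat 1"
  unfolding diagm_def mat_def by simp

lemma det_diagm: "det (diagm d) = (\<Prod>i\<in>UNIV. d i)"
  by (subst det_diagonal) (auto simp: diagm_def)

lemma isCont_diagm_mult_vec:
  assumes "\<And>l. isCont (\<lambda>t. d t l) t0"
  shows "isCont (\<lambda>t. (B *v (diagm (d t) *v z)) $ j) t0"
proof -
  have "(\<lambda>t. (B *v (diagm (d t) *v z)) $ j) = (\<lambda>t. \<Sum>l\<in>UNIV. B$j$l * (d t l * z$l))"
    by (simp add: matrix_vector_mult_def[of B] diagm_mult_vec)
  then show ?thesis by (simp only:) (intro continuous_intros assms)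
qed

lemma isCont_vec_mult_diagm:
  assumes "\<And>l. isCont (\<lambda>t. d t l) t0"
  shows "isCont (\<lambda>t. ((w v* diagm (d t)) v* Bi) $ j) t0"
proof -
  have "(\<lambda>t. ((w v* diagm (d t)) v* Bi) $ j) = (\<lambda>t. \<Sum>l\<in>UNIV. w$l * d t l * Bi$l$j)"
    by (simp add: vector_matrix_mult_def[of _ Bi] vec_mult_diagm)
  then show ?thesis by (simp only:) (intro continuous_intros assms)
qed

lemma exists_matrix_frame:
  fixes u :: "complex^'n"
  assumes "u$a \<noteq> 0"
  obtains B Bi :: "complex^'n^'n" where "B ** Bi = mat 1" "Bi ** B = mat 1" "B *v axis a 1 = u"
proof -
  define B :: "complex^'n^'n" where "B = (\<chi> i j. if j = a then u$i else (mat 1::complex^'n^'n)$i$j)"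
  have "det B = u$a * det (mat 1::complex^'n^'n)"
    using cramer_lemma[where A="mat 1::complex^'n^'n" and k=a and x=u]
    unfolding matrix_vector_mul_lid B_def .
  then have "invertible B" using assms by (simp add: det_I invertible_det_nz)
  then obtain Bi where "B ** Bi = mat 1" "Bi ** B = mat 1" unfolding invertible_def by blast
  moreover have "B *v axis a 1 = u"
    by (simp add: B_def vec_eq_iff matrix_vector_mult_def axis_def if_distrib if_distribR sum.delta' cong: if_cong)
  ultimately show ?thesis by (rule that)
qed

locale matrix_frame =
  fixes B Bi :: "complex^'n^'n"
  assumes right_inverse: "B ** Bi = mat 1" and left_inverse: "Bi ** B = mat 1"
begin

definition torus :: "'n \<Rightarrow> complex \<Rightarrow> complex^'n^'n" where
  "torus a t = B ** diagm (\<lambda>l. if l = a then t ^ (CARD('n) - 1) else inverse t) ** Bi"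

lemma det_torus:
  assumes "t \<noteq> 0"
  shows "det (torus a t) = 1"
proof -
  let ?d = "\<lambda>l. if l = a then t ^ (CARD('n) - 1) else inverse t"
  have "(\<Prod>l\<in>UNIV. ?d l) = ?d a * (\<Prod>l\<in>UNIV - {a}. ?d l)"
    by (rule prod.remove) auto
  also have "(\<Prod>l\<in>UNIV - {a}. ?d l) = inverse t ^ (CARD('n) - 1)"
    by (simp add: card_Diff_singleton)
  also have "?d a * inverse t ^ (CARD('n) - 1) = 1"
    using assms by (simp add: power_inverse)
  finally have "det (diagm ?d) = 1" by (simp only: det_diagm)
  moreover have "det B * det Bi = 1" using det_mul[of B Bi] right_inverse by (simp add: det_I)
  ultimately show ?thesis unfolding torus_def det_mul by (simp add: mult_ac)
qed

lemma torus_mult_torus_inverse: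
  assumes "t \<noteq> 0"
  shows "torus a t ** torus a (inverse t) = mat 1"
proof -
  have "(if l = a then t ^ (CARD('n) - 1) else inverse t) *
        (if l = a then inverse t ^ (CARD('n) - 1) else inverse (inverse t)) = 1" for l
    using assms by (simp add: power_inverse)
  then have "diagm (\<lambda>l. if l = a then t ^ (CARD('n) - 1) else inverse t) **
        diagm (\<lambda>l. if l = a then inverse t ^ (CARD('n) - 1) else inverse (inverse t)) = mat 1"
    by (simp only: diagm_mult_diagm diagm_1)
  then have "X ** diagm (\<lambda>l. if l = a then t ^ (CARD('n) - 1) else inverse t) **
        diagm (\<lambda>l. if l = a then inverse t ^ (CARD('n) - 1) else inverse (inverse t)) = X"
    for X :: "complex^'n^'n"
    by (metis matrix_mul_assoc matrix_mul_rid)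
  moreover have "X ** Bi ** B = X" for X :: "complex^'n^'n"
    by (metis left_inverse matrix_mul_assoc matrix_mul_rid)
  ultimately show ?thesis
    unfolding torus_def by (simp add: matrix_mul_assoc right_inverse)
qed

lemma torus_mult_frame_axis: "torus a t *v (B *v axis a 1) = t ^ (CARD('n) - 1) *s (B *v axis a 1)"
proof -
  have "Bi *v (B *v axis a 1) = axis a 1"
    by (simp add: matrix_vector_mul_assoc left_inverse)
  moreover have "diagm (\<lambda>l. if l = a then t ^ (CARD('n) - 1) else inverse t) *v axis a 1
      = t ^ (CARD('n) - 1) *s axis a 1"
    by (simp add: diagm_mult_vec vec_eq_iff axis_def)
  ultimately show ?thesis
    unfolding torus_def by (simp add: matrix_vector_mul_assoc[symmetric] vector_scalar_commute)
qed

lemma torus_mult_vec: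
  assumes "t \<noteq> 0"
  shows "torus a t *v z
    = inverse t *s (B *v (diagm (\<lambda>l. if l = a then t ^ CARD('n) else 1) *v (Bi *v z)))"
proof -
  have "t ^ CARD('n) = t ^ (CARD('n) - 1) * t" using power_minus_mult[of "CARD('n)" t] by simp
  then have "inverse t * t ^ CARD('n) = t ^ (CARD('n) - 1)"
    using assms by (simp add: mult.left_commute)
  then have "diagm (\<lambda>l. if l = a then t ^ (CARD('n) - 1) else inverse t) *v y
      = inverse t *s (diagm (\<lambda>l. if l = a then t ^ CARD('n) else 1) *v y)" for y
    by (simp add: diagm_mult_vec vec_eq_iff)
  then show ?thesis
    unfolding torus_def by (simp add: matrix_vector_mul_assoc[symmetric] vector_scalar_commute)
qed

lemma vec_mult_torus_inverse:
  assumes "t \<noteq> 0"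
  shows "w v* torus a (inverse t)
    = inverse (t ^ (CARD('n) - 1)) *s (((w v* B) v* diagm (\<lambda>l. if l = a then 1 else t ^ CARD('n))) v* Bi)"
proof -
  have "t ^ CARD('n) = t ^ (CARD('n) - 1) * t" using power_minus_mult[of "CARD('n)" t] by simp
  then have "inverse (t ^ (CARD('n) - 1)) * t ^ CARD('n) = t"
    using assms by (simp add: mult.assoc[symmetric])
  then have "y v* diagm (\<lambda>l. if l = a then inverse t ^ (CARD('n) - 1) else inverse (inverse t))
      = inverse (t ^ (CARD('n) - 1)) *s (y v* diagm (\<lambda>l. if l = a then 1 else t ^ CARD('n)))" for y
    by (simp add: vec_mult_diagm vec_eq_iff power_inverse)
  then show ?thesis
    unfolding torus_def by (simp add: vector_matrix_mul_assoc[symmetric] scalar_vector_matrix_assoc)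
qed

lemma vec_mult_torus_inverse_annihilator:
  assumes "(w v* B)$a = 0"
  shows "w v* torus a (inverse t) = t *s w"
proof -
  have "(w v* B) v* diagm (\<lambda>l. if l = a then inverse t ^ (CARD('n) - 1) else inverse (inverse t))
      = t *s (w v* B)"
    using assms by (auto simp: vec_mult_diagm vec_eq_iff)
  then show ?thesis
    using vector_matrix_mul_assoc[of w B Bi] right_inverse unfolding torus_def
    by (simp add: vector_matrix_mul_assoc[symmetric] scalar_vector_matrix_assoc)
qed

definition stretch :: "'n \<Rightarrow> nat set \<Rightarrow> complex \<Rightarrow> (nat \<Rightarrow> complex^'n) \<times> (nat \<Rightarrow> complex^'n)
    \<Rightarrow> (nat \<Rightarrow> complex^'n) \<times> (nat \<Rightarrow> complex^'n)" where
  "stretch a S t p =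
    (\<lambda>i. if i \<in> S then fst p i
         else B *v (diagm (\<lambda>l. if l = a then t ^ CARD('n) else 1) *v (Bi *v fst p i)),
     \<lambda>i. if i \<in> S then snd p i
         else ((snd p i v* B) v* diagm (\<lambda>l. if l = a then 1 else t ^ CARD('n))) v* Bi)"

lemma isCont_stretch:
  assumes "poly_fun r F"
  shows "isCont (\<lambda>t. F (stretch a S t p)) 0"
proof (rule isCont_poly_fun[OF assms])
  have stretch: "isCont (\<lambda>t::complex. if l = a then t ^ m else 1) 0" for l and m :: nat
    by (cases "l = a") (auto intro!: continuous_intros)
  have costretch: "isCont (\<lambda>t::complex. if l = a then 1 else t ^ m) 0" for l and m :: nat
    by (cases "l = a") (auto intro!: continuous_intros)
  show "isCont (\<lambda>t. fst (stretch a S t p) i $ j) 0" for i j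
    unfolding stretch_def fst_conv by (cases "i \<in> S") (simp_all add: isCont_diagm_mult_vec stretch)
  show "isCont (\<lambda>t. snd (stretch a S t p) i $ j) 0" for i j
    unfolding stretch_def snd_conv by (cases "i \<in> S") (simp_all add: isCont_vec_mult_diagm costretch)
qed

text \<open>Under torus a t the pairs indexed by S are scaled by t^n, all others by t^-n times the
  remainder recorded in stretch, which stays bounded as t tends to 0; since S contains more
  than half of the indices, the total weight is a positive power of t.\<close>
lemma invariant_torus_scaling:
  fixes F :: "(nat \<Rightarrow> complex^'n) \<times> (nat \<Rightarrow> complex^'n) \<Rightarrow> complex"
  assumes F: "multihom r k F" "SL_invariant F"
    and S: "S \<subseteq> {..<r}" "r < 2 * card S"
    and V: "\<And>i. i \<in> S \<Longrightarrow> V i = B *v axis a 1"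
    and W: "\<And>i. i \<in> S \<Longrightarrow> (W i v* B)$a = 0"
    and "t \<noteq> 0"
  shows "F (V, W) = t ^ (CARD('n) * k * (2 * card S - r)) * F (stretch a S t (V, W))"
proof -
  define cv where "cv i = (if i \<in> S then t ^ (CARD('n) - 1) else inverse t)" for i
  define cw where "cw i = (if i \<in> S then t else inverse (t ^ (CARD('n) - 1)))" for i
  have "torus a t *v V i = cv i *s fst (stretch a S t (V, W)) i" for i
    using \<open>t \<noteq> 0\<close> by (cases "i \<in> S")
      (simp_all add: V cv_def stretch_def torus_mult_frame_axis torus_mult_vec)
  moreover have "transpose (torus a (inverse t)) *v W i = cw i *s snd (stretch a S t (V, W)) i" for i
  proof (cases "i \<in> S")
    case True
    then show ?thesis by (simp add: W cw_def stretch_def vec_mult_torus_inverse_annihilator)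
  next
    case False
    then show ?thesis using \<open>t \<noteq> 0\<close> by (simp add: cw_def stretch_def vec_mult_torus_inverse)
  qed
  moreover have "F (V, W) = F (\<lambda>i. torus a t *v V i, \<lambda>i. transpose (torus a (inverse t)) *v W i)"
    using F(2) det_torus[OF \<open>t \<noteq> 0\<close>] torus_mult_torus_inverse[OF \<open>t \<noteq> 0\<close>]
    unfolding SL_invariant_def by simp
  ultimately have "F (V, W) = (\<Prod>i<r. (cv i * cw i) ^ k) * F (stretch a S t (V, W))"
    using multihom_scale[OF F(1), of cv "fst (stretch a S t (V, W))" cw] by (simp add: power_mult_distrib)
  also have "(\<Prod>i<r. (cv i * cw i) ^ k)
      = (\<Prod>i<r. if i \<in> S then t ^ (CARD('n) * k) else inverse (t ^ (CARD('n) * k)))"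
  proof (rule prod.cong)
    fix i
    have "t ^ (CARD('n) - 1) * t = t ^ CARD('n)" by (rule power_minus_mult) simp
    moreover have "inverse t * inverse (t ^ (CARD('n) - 1)) = inverse (t ^ (CARD('n) - 1) * t)"
      by (simp add: mult.commute)
    ultimately have "cv i * cw i = (if i \<in> S then t ^ CARD('n) else inverse (t ^ CARD('n)))"
      by (simp add: cv_def cw_def)
    then show "(cv i * cw i) ^ k
        = (if i \<in> S then t ^ (CARD('n) * k) else inverse (t ^ (CARD('n) * k)))"
      by (simp add: power_inverse flip: power_mult)
  qed simp
  also have "\<dots> = (t ^ (CARD('n) * k)) ^ (2 * card S - r)"
    using S \<open>t \<noteq> 0\<close> by (simp add: prod_if_mem_inverse)
  finally show ?thesis by (simp add: power_mult)
qed

lemma invariant_vanishes_if_concentrated: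
  fixes F :: "(nat \<Rightarrow> complex^'n) \<times> (nat \<Rightarrow> complex^'n) \<Rightarrow> complex"
  assumes F: "multihom r k F" "k > 0" "SL_invariant F"
    and S: "S \<subseteq> {..<r}" "r < 2 * card S"
    and V: "\<And>i. i \<in> S \<Longrightarrow> V i = B *v axis a 1"
    and W: "\<And>i. i \<in> S \<Longrightarrow> (W i v* B)$a = 0"
  shows "F (V, W) = 0"
proof (rule eq_0_if_pow_mult_near_0)
  show "isCont (\<lambda>t. F (stretch a S t (V, W))) 0"
    using F(1) isCont_stretch unfolding multihom_def by blast
  show "CARD('n) * k * (2 * card S - r) > 0" using F(2) S(2) by simp
  show "F (V, W) = t ^ (CARD('n) * k * (2 * card S - r)) * F (stretch a S t (V, W))" if "t \<noteq> 0" for t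
    by (rule invariant_torus_scaling[OF F(1,3) S V W that])
qed

end

section \<open>Semistability of isotropic configurations\<close>

lemma semistable_imp_multiplicity_bound:
  fixes h :: "complex^'n \<Rightarrow> complex^'n \<Rightarrow> complex"
  assumes hs: "herm_sig_n1_1 h" and "semistable h r L" and M: "isotropic_line h M"
  shows "2 * card {i. i < r \<and> L i = M} \<le> r"
proof (rule ccontr)
  define S where "S = {i. i < r \<and> L i = M}"
  assume "\<not> 2 * card {i. i < r \<and> L i = M} \<le> r"
  then have S: "S \<subseteq> {..<r}" "r < 2 * card S" unfolding S_def by auto
  obtain k F where F: "k > 0" "multihom r k F" "SL_invariant F" "F (flag_point h L) \<noteq> 0"
    using \<open>semistable h r L\<close> unfolding semistable_def by blast
  have "is_line M" using M unfolding isotropic_line_def by simp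
  then have u: "gen M \<noteq> 0" "h (gen M) (gen M) = 0"
    using M gen_in_line unfolding isotropic_line_def by auto
  then obtain a where "gen M $ a \<noteq> 0" by (metis vec_eq_iff zero_index)
  then obtain B Bi where frame: "matrix_frame B Bi" and Bu: "B *v axis a 1 = gen M"
    using exists_matrix_frame unfolding matrix_frame_def by metis
  have "F (flag_point h L) = 0"
    unfolding flag_point_def
  proof (rule matrix_frame.invariant_vanishes_if_concentrated[OF frame F(2,1,3) S])
    show "gen (L i) = B *v axis a 1" if "i \<in> S" for i
      using that Bu by (simp add: S_def)
    have "((\<chi> j. h (axis j 1) (gen M)) v* B) $ a = dual_pair (\<chi> j. h (axis j 1) (gen M)) (B *v axis a 1)"
      by (simp only: dual_pair_axis[symmetric] dual_pair_vector_matrix_mult)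
    also have "\<dots> = h (gen M) (gen M)"
      unfolding Bu by (rule herm_sig_n1_1_linear_left[OF hs, symmetric])
    finally show "((\<chi> j. h (axis j 1) (gen (L i))) v* B) $ a = 0" if "i \<in> S" for i
      using that u(2) by (simp add: S_def)
  qed
  then show False using F(4) by simp
qed

lemma s_sigma_nonzero_if_moves_lines:
  fixes h :: "complex^'n \<Rightarrow> complex^'n \<Rightarrow> complex"
  assumes hs: "herm_sig_n1_1 h" and iso: "\<forall>i<r. isotropic_line h (L i)"
    and \<sigma>: "\<sigma> permutes {..<r}" and moves: "\<forall>i<r. L (\<sigma> i) \<noteq> L i"
  shows "s_sigma h r \<sigma> L \<noteq> 0"
proof -
  have "h (gen (L i)) (gen (L (\<sigma> i))) \<noteq> 0" if "i < r" for i
  proof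
    assume "h (gen (L i)) (gen (L (\<sigma> i))) = 0"
    moreover have "\<sigma> i < r" using permutes_in_image[OF \<sigma>] that by simp
    ultimately have "L i = L (\<sigma> i)" using isotropic_lines_eq_if_orthogonal[OF hs] iso that by blast
    then show False using moves that by metis
  qed
  then show ?thesis unfolding s_sigma_def by simp
qed

theorem proposition4p15:
  fixes h :: "complex^'n \<Rightarrow> complex^'n \<Rightarrow> complex"
    and r :: nat
    and L :: "nat \<Rightarrow> (complex^'n) set"
  assumes "CARD('n) \<ge> 3" and "r \<ge> 3"
    and "herm_sig_n1_1 h"
    and "\<forall>i<r. isotropic_line h (L i)"
  shows "(semistable h r L \<longleftrightarrow>
            (\<forall>M. isotropic_line h M \<longrightarrow> 2 * card {i. i < r \<and> L i = M} \<le> r))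
       \<and> (even r \<longrightarrow>
            (semistable h r L \<longleftrightarrow>
              (\<exists>\<sigma>. derangement r \<sigma> \<and> \<sigma> \<circ> \<sigma> = id \<and> \<sigma> \<noteq> id \<and> s_sigma h r \<sigma> L \<noteq> 0)))"
proof -
  note hs = assms(3) and iso = assms(4)
  let ?bound = "\<forall>M. isotropic_line h M \<longrightarrow> 2 * card {i. i < r \<and> L i = M} \<le> r"
  let ?involution = "\<exists>\<sigma>. derangement r \<sigma> \<and> \<sigma> \<circ> \<sigma> = id \<and> \<sigma> \<noteq> id \<and> s_sigma h r \<sigma> L \<noteq> 0"
  have moving_perm: "\<exists>\<sigma>. \<sigma> permutes {..<r} \<and> (\<forall>i<r. L (\<sigma> i) \<noteq> L i) \<and> (even r \<longrightarrow> \<sigma> \<circ> \<sigma> = id)"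
    if ?bound
    using exists_perm_moving_fibres[of r L] that iso by auto
  have bound_iff: "semistable h r L \<longleftrightarrow> ?bound"
    using semistable_imp_multiplicity_bound[OF hs] moving_perm
      semistable_if_s_sigma_nonzero[OF hs] s_sigma_nonzero_if_moves_lines[OF hs iso] by metis
  moreover have "semistable h r L \<longleftrightarrow> ?involution" if "even r"
  proof
    assume "semistable h r L"
    then obtain \<sigma> where \<sigma>: "\<sigma> permutes {..<r}" "\<forall>i<r. L (\<sigma> i) \<noteq> L i" "\<sigma> \<circ> \<sigma> = id"
      using moving_perm bound_iff \<open>even r\<close> by blast
    moreover have "\<sigma> 0 \<noteq> 0" using \<sigma>(2) assms(2) by (metis not_gr0 not_numeral_le_zero)
    ultimately show ?involution
      using s_sigma_nonzero_if_moves_lines[OF hs iso] unfolding derangement_def by (metis id_apply)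
  next
    assume ?involution
    then show "semistable h r L"
      using semistable_if_s_sigma_nonzero[OF hs] unfolding derangement_def by blast
  qed
  ultimately show ?thesis by blast
qed

end
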